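(* Let $n$ be odd and let $S$ be a semiregular subgroup of $G^*$. Then there exists $\varphi\in G^*\setminus G$ of order $2$ such that $\varphi s=s\varphi$ for every $s\in S$.
   Context: Fix $n\ge 2$, $W=\{1,\dots,n\}$, $M=\{n+1,\dots,2n\}$, $I=W\cup M$. $G^*=\{\varphi\in\mathrm{Sym}(I):\{\varphi(W),\varphi(M)\}=\{W,M\}\}$ and $G=\{\varphi\in\mathrm{Sym}(I):\varphi(W)=W,\ \varphi(M)=M\}$. A subgroup $S\le\mathrm{Sym}(I)$ is semiregular if for every $z\in I$ the only element $s\in S$ with $s(z)=z$ is the identity. *)

theory Defs
  imports "HOL-Algebra.Sym_Groups" "HOL-Algebra.Multiplicative_Group"
begin

definition Wset :: "nat \<Rightarrow> nat set" where "Wset n = {1..n}"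
definition Mset :: "nat \<Rightarrow> nat set" where "Mset n = {n+1..2*n}"
definition Iset :: "nat \<Rightarrow> nat set" where "Iset n = {1..2*n}"

definition Gstar :: "nat \<Rightarrow> (nat \<Rightarrow> nat) set" where
  "Gstar n = {\<phi>. \<phi> permutes Iset n \<and> {\<phi> ` Wset n, \<phi> ` Mset n} = {Wset n, Mset n}}"

definition Gfix :: "nat \<Rightarrow> (nat \<Rightarrow> nat) set" where
  "Gfix n = {\<phi>. \<phi> permutes Iset n \<and> \<phi> ` Wset n = Wset n \<and> \<phi> ` Mset n = Mset n}"

definition semiregular :: "nat \<Rightarrow> (nat \<Rightarrow> nat) set \<Rightarrow> bool" where
  "semiregular n S \<longleftrightarrow> (\<forall>z \<in> Iset n. \<forall>s \<in> S. s z = z \<longrightarrow> s = id)"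

end

theory Submission
  imports Defs
begin

text \<open>
  Since S acts semiregularly, it acts regularly on each of its orbits, so an S-equivariant map
  of I is determined by arbitrary values on a set of orbit representatives.
  If S \<subseteq> G, then W and M each split into n / |S| orbits; pairing the orbits of W with those
  of M and exchanging matching representatives gives the involution.
  Otherwise H = S \<inter> G has index 2 in S, and |H| is odd because H acts semiregularly on W,
  so |H| divides n.  Inversion is then an involution of the odd set S - H, hence fixes some t:
  an element of order 2 exchanging W and M.  The equivariant map sending each representative r
  to t r, i.e. s r \<mapsto> s (t r), is the required involution.
\<close>

section \<open>Involutions in groups\<close>

lemma involution_has_fixed_point_if_odd_card:
  assumes "finite A" "\<And>x. x \<in> A \<Longrightarrow> f x \<in> A" "\<And>x. x \<in> A \<Longrightarrow> f (f x) = x"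
    and "odd (card A)"
  shows "\<exists>x\<in>A. f x = x"
  using assms
proof (induction "card A" arbitrary: A rule: less_induct)
  case less
  then obtain x where x: "x \<in> A" by fastforce
  show ?case
  proof (cases "f x = x")
    case True
    with x show ?thesis by blast
  next
    case False
    define A' where "A' = A - {x, f x}"
    have fx: "f x \<in> A" using less.prems(2) x by blast
    have card_A': "card A' = card A - 2"
      unfolding A'_def using less.prems(1) x fx False by (simp add: card_Diff_subset)
    have "card {x, f x} \<le> card A"
      using x fx less.prems(1) by (intro card_mono) auto
    then have two_le: "2 \<le> card A" using False by simp
    have "\<exists>y\<in>A'. f y = y"
    proof (rule less.hyps)
      show "card A' < card A" using card_A' two_le by simp
      show "finite A'" unfolding A'_def using less.prems(1) by simp
      show "odd (card A')" using card_A' two_le less.prems(4) by simp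
      show "f y \<in> A'" if "y \<in> A'" for y
      proof -
        have y: "y \<in> A" "y \<noteq> x" "y \<noteq> f x"
          using that unfolding A'_def by auto
        have "f y \<noteq> x"
          using y(1,3) less.prems(3) by force
        moreover have "f y \<noteq> f x"
          using y(1,2) x less.prems(3) by metis
        ultimately show ?thesis
          using less.prems(2)[OF y(1)] unfolding A'_def by simp
      qed
      show "f (f y) = y" if "y \<in> A'" for y
        using that less.prems(3) unfolding A'_def by blast
    qed
    then show ?thesis unfolding A'_def by blast
  qed
qed

lemma (in group) ord_eq_2_iff:
  assumes "x \<in> carrier G"
  shows "ord x = 2 \<longleftrightarrow> x \<noteq> \<one> \<and> x \<otimes> x = \<one>"
proof -
  have "x \<otimes> x = x [^] (2::nat)"
    using assms by (simp add: numeral_2_eq_2)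
  then have "x \<otimes> x = \<one> \<longleftrightarrow> ord x dvd 2"
    using assms by (simp add: pow_eq_id)
  moreover have "ord x dvd 2 \<longleftrightarrow> ord x = 1 \<or> ord x = 2"
  proof
    assume "ord x dvd 2"
    then have "ord x > 0" "ord x \<le> 2"
      using dvd_pos_nat[of 2 "ord x"] dvd_imp_le[of "ord x" 2] by simp_all
    then show "ord x = 1 \<or> ord x = 2" by presburger
  qed auto
  ultimately show ?thesis
    using ord_eq_1[OF assms] by auto
qed

lemma (in group) card_complement_eq_card_subgroup:
  assumes H: "subgroup H G" and K: "subgroup K G" and "H \<subseteq> K" and a: "a \<in> K - H"
    and index_two: "\<And>x y. x \<in> K - H \<Longrightarrow> y \<in> K - H \<Longrightarrow> inv x \<otimes> y \<in> H"
  shows "card (K - H) = card H"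
proof -
  have carrier: "x \<in> carrier G" if "x \<in> K" for x
    using that subgroup.mem_carrier[OF K] by blast
  have "bij_betw ((\<otimes>) a) H (K - H)"
  proof (rule bij_betw_imageI)
    show "inj_on ((\<otimes>) a) H"
    proof (rule inj_onI)
      fix h h' assume "h \<in> H" "h' \<in> H" "a \<otimes> h = a \<otimes> h'"
      then show "h = h'"
        using Units_l_cancel[of a h h'] a \<open>H \<subseteq> K\<close> carrier by auto
    qed
    show "(\<otimes>) a ` H = K - H"
    proof (intro equalityI subsetI)
      fix y assume "y \<in> (\<otimes>) a ` H"
      then obtain h where h: "h \<in> H" "y = a \<otimes> h" by blast
      have "a = y \<otimes> inv h"
        using h a \<open>H \<subseteq> K\<close> carrier by (auto simp: m_assoc)
      have "y \<notin> H"
      proof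
        assume "y \<in> H"
        then have "y \<otimes> inv h \<in> H"
          using h(1) subgroup.m_closed[OF H] subgroup.m_inv_closed[OF H] by blast
        with \<open>a = y \<otimes> inv h\<close> a show False by simp
      qed
      moreover have "y \<in> K"
        using h a \<open>H \<subseteq> K\<close> subgroup.m_closed[OF K] by auto
      ultimately show "y \<in> K - H" by blast
    next
      fix y assume y: "y \<in> K - H"
      have "y = a \<otimes> (inv a \<otimes> y)"
        using a y carrier by (simp add: m_assoc[symmetric])
      with index_two[OF a y] show "y \<in> (\<otimes>) a ` H" by blast
    qed
  qed
  then show ?thesis by (rule bij_betw_same_card[symmetric])
qed

lemma (in group) involution_in_complement_if_odd_card:
  assumes H: "subgroup H G" and K: "subgroup K G" and "finite K" "odd (card (K - H))"
  shows "\<exists>t\<in>K - H. t \<otimes> t = \<one>"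
proof -
  have carrier: "x \<in> carrier G" if "x \<in> K" for x
    using that subgroup.mem_carrier[OF K] by blast
  have "inv x \<in> K - H" if x: "x \<in> K - H" for x
  proof -
    have "inv x \<notin> H"
      using x carrier subgroup.m_inv_closed[OF H, of "inv x"] by auto
    then show ?thesis
      using x subgroup.m_inv_closed[OF K] by blast
  qed
  moreover have "inv (inv x) = x" if "x \<in> K - H" for x
    using that carrier by simp
  ultimately obtain t where t: "t \<in> K - H" "inv t = t"
    using involution_has_fixed_point_if_odd_card[of "K - H" "m_inv G"] assms(3,4) by blast
  have "t \<otimes> t = t \<otimes> inv t"
    using t(2) by simp
  also have "\<dots> = \<one>"
    using t(1) carrier by simp
  finally show ?thesis
    using t(1) by blast
qed

section \<open>Semiregular permutation groups\<close>

definition preserves_or_swaps :: "('a \<Rightarrow> 'a) set \<Rightarrow> 'a set \<Rightarrow> 'a set \<Rightarrow> bool" where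
  "preserves_or_swaps S X A \<longleftrightarrow>
     (\<forall>s\<in>S. (\<forall>x\<in>X. s x \<in> A \<longleftrightarrow> x \<in> A) \<or> (\<forall>x\<in>X. s x \<in> A \<longleftrightarrow> x \<notin> A))"

definition swapping_involution ::
    "('a \<Rightarrow> 'a) set \<Rightarrow> 'a set \<Rightarrow> 'a set \<Rightarrow> ('a \<Rightarrow> 'a) \<Rightarrow> bool" where
  "swapping_involution S X A \<phi> \<longleftrightarrow>
     (\<forall>x. x \<notin> X \<longrightarrow> \<phi> x = x) \<and> (\<forall>x. \<phi> (\<phi> x) = x) \<and>
     (\<forall>x\<in>X. \<phi> x \<in> A \<longleftrightarrow> x \<notin> A) \<and> (\<forall>s\<in>S. \<forall>x\<in>X. \<phi> (s x) = s (\<phi> x))"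

definition orbit_of :: "('a \<Rightarrow> 'a) set \<Rightarrow> 'a \<Rightarrow> 'a set" where
  "orbit_of S x = (\<lambda>s. s x) ` S"

lemma swapping_involution_permutes:
  assumes "swapping_involution S X A \<phi>"
  shows "\<phi> permutes X"
proof -
  have outside: "\<phi> x = x" if "x \<notin> X" for x
    using assms that unfolding swapping_involution_def by blast
  have invol: "\<phi> (\<phi> x) = x" for x
    using assms unfolding swapping_involution_def by blast
  show ?thesis
    unfolding permutes_def
  proof (intro conjI allI impI ex1I)
    show "\<phi> x = x" if "x \<notin> X" for x
      using that by (rule outside)
    show "\<phi> (\<phi> y) = y" for y
      by (rule invol)
    show "x = \<phi> y" if "\<phi> x = y" for x y
      using that invol by metis
  qed
qed

lemma swapping_involution_image:
  assumes \<phi>: "swapping_involution S X A \<phi>" and "A \<subseteq> X"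
  shows "\<phi> ` A = X - A" "\<phi> ` (X - A) = A"
proof -
  have perm: "\<phi> permutes X"
    using \<phi> by (rule swapping_involution_permutes)
  have swaps: "\<phi> x \<in> A \<longleftrightarrow> x \<notin> A" if "x \<in> X" for x
    using \<phi> that unfolding swapping_involution_def by blast
  have invol: "\<phi> (\<phi> x) = x" for x
    using \<phi> unfolding swapping_involution_def by blast
  show image_A: "\<phi> ` A = X - A"
  proof (intro equalityI subsetI)
    show "y \<in> X - A" if "y \<in> \<phi> ` A" for y
      using that \<open>A \<subseteq> X\<close> swaps permutes_in_image[OF perm] by auto
    show "y \<in> \<phi> ` A" if "y \<in> X - A" for y
      using that swaps permutes_in_image[OF perm] image_eqI[of y \<phi> "\<phi> y"] invol by auto
  qed
  have "\<phi> ` (\<phi> ` A) = A"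
    using invol by (simp add: image_comp comp_def)
  then show "\<phi> ` (X - A) = A"
    using image_A by simp
qed

lemma swapping_involution_commute:
  assumes "swapping_involution S X A \<phi>" "s \<in> S" "s permutes X"
  shows "\<phi> \<circ> s = s \<circ> \<phi>"
proof
  fix x show "(\<phi> \<circ> s) x = (s \<circ> \<phi>) x"
    using assms permutes_not_in[OF assms(3)] unfolding swapping_involution_def
    by (cases "x \<in> X") auto
qed

locale semiregular_perm_group =
  fixes m :: nat and S :: "(nat \<Rightarrow> nat) set" and X :: "nat set"
  assumes subgroup: "subgroup S (sym_group m)"
    and X_subset: "X \<subseteq> {1..m}"
    and invariant: "\<And>s x. s \<in> S \<Longrightarrow> x \<in> X \<Longrightarrow> s x \<in> X"
    and fixpoint_free: "\<And>s x. s \<in> S \<Longrightarrow> x \<in> X \<Longrightarrow> s x = x \<Longrightarrow> s = id"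
begin

abbreviation orbit :: "nat \<Rightarrow> nat set" where
  "orbit \<equiv> orbit_of S"

lemma permutes: "s \<in> S \<Longrightarrow> s permutes {1..m}"
  using subgroup.subset[OF subgroup] by (auto simp: sym_group_carrier)

lemma id_mem: "id \<in> S"
  using subgroup.one_closed[OF subgroup] by (simp add: sym_group_one)

lemma comp_mem: "a \<in> S \<Longrightarrow> b \<in> S \<Longrightarrow> a \<circ> b \<in> S"
  using subgroup.m_closed[OF subgroup] by (simp add: sym_group_mult)

lemma inv_mem: "s \<in> S \<Longrightarrow> inv' s \<in> S"
  using subgroup.m_inv_closed[OF subgroup] subgroup.subset[OF subgroup] by force

lemma finite_S: "finite S"
proof -
  have "S \<subseteq> {p. p permutes {1..m}}"
    using permutes by blast
  then show ?thesis
    using finite_permutations[of "{1..m}"] finite_subset by auto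
qed

lemma finite_X: "finite X"
  using X_subset finite_subset by blast

lemma eq_if_eq_at:
  assumes "a \<in> S" "b \<in> S" "x \<in> X" "a x = b x"
  shows "a = b"
proof -
  have "inv' b \<circ> a \<in> S"
    using assms(1,2) by (intro comp_mem inv_mem)
  moreover have "(inv' b \<circ> a) x = x"
    using assms(4) permutes_inverses(2)[OF permutes[OF assms(2)]] by simp
  ultimately have "inv' b \<circ> a = id"
    using fixpoint_free assms(3) by blast
  then have "b \<circ> (inv' b \<circ> a) = b" by simp
  then show ?thesis
    using permutes_inv_o(1)[OF permutes[OF assms(2)]] by (simp add: comp_assoc[symmetric])
qed

lemma mem_orbit_self: "x \<in> orbit x"
  unfolding orbit_of_def using image_eqI[of x "\<lambda>s. s x" id] id_mem by simp

lemma orbit_subset: "x \<in> X \<Longrightarrow> orbit x \<subseteq> X"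
  unfolding orbit_of_def image_subset_iff using invariant by blast

lemma act_mem_orbit: "s \<in> S \<Longrightarrow> s x \<in> orbit x"
  unfolding orbit_of_def by (rule imageI)

lemma mem_orbit_iff: "y \<in> orbit x \<longleftrightarrow> (\<exists>s\<in>S. y = s x)"
  unfolding orbit_of_def by (rule image_iff)

lemma orbit_subset_orbit:
  assumes "y \<in> orbit x"
  shows "orbit y \<subseteq> orbit x"
proof
  fix z assume "z \<in> orbit y"
  then obtain a b where "a \<in> S" "b \<in> S" "y = a x" "z = b y"
    using assms unfolding mem_orbit_iff by blast
  then show "z \<in> orbit x"
    using act_mem_orbit[OF comp_mem, of b a x] by simp
qed

lemma orbit_eq:
  assumes "y \<in> orbit x"
  shows "orbit y = orbit x"
proof -
  obtain a where a: "a \<in> S" "y = a x"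
    using assms unfolding mem_orbit_iff by blast
  then have "x = inv' a y"
    using permutes_inverses(2)[OF permutes] by simp
  then have "x \<in> orbit y"
    using act_mem_orbit[OF inv_mem[OF a(1)]] by simp
  then show ?thesis
    using orbit_subset_orbit assms by blast
qed

lemma orbits_disjoint:
  assumes "orbit x \<noteq> orbit y"
  shows "orbit x \<inter> orbit y = {}"
proof (rule ccontr)
  assume "orbit x \<inter> orbit y \<noteq> {}"
  then obtain z where "z \<in> orbit x" "z \<in> orbit y" by blast
  then have "orbit x = orbit y"
    using orbit_eq by metis
  with assms show False ..
qed

lemma card_orbit:
  assumes "x \<in> X"
  shows "card (orbit x) = card S"
proof -
  have "inj_on (\<lambda>s. s x) S"
    using eq_if_eq_at[OF _ _ assms] by (intro inj_onI)
  then have "card ((\<lambda>s. s x) ` S) = card S"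
    by (rule card_image)
  then show ?thesis
    by (simp only: orbit_of_def)
qed

lemma card_mult_card_orbits: "card S * card (orbit ` X) = card X"
proof -
  have "card S * card (orbit ` X) = card (\<Union> (orbit ` X))"
  proof (rule card_partition)
    show "finite (orbit ` X)"
      using finite_X by (rule finite_imageI)
    show "finite (\<Union> (orbit ` X))"
      using finite_X orbit_subset by (intro finite_Union finite_imageI) (auto intro: finite_subset)
    show "card c = card S" if "c \<in> orbit ` X" for c
      using that card_orbit by blast
    show "c1 \<inter> c2 = {}" if "c1 \<in> orbit ` X" "c2 \<in> orbit ` X" "c1 \<noteq> c2" for c1 c2
      using that orbits_disjoint by blast
  qed
  also have "\<Union> (orbit ` X) = X"
    using orbit_subset mem_orbit_self by (intro equalityI) (auto simp del: Union_iff)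
  finally show ?thesis .
qed

lemma card_dvd_card: "card S dvd card X"
  using card_mult_card_orbits by (metis dvd_triv_left)

definition rep :: "nat \<Rightarrow> nat" where
  "rep x = (SOME z. z \<in> orbit x)"

lemma rep_mem_orbit: "rep x \<in> orbit x"
  unfolding rep_def by (rule someI[of "\<lambda>z. z \<in> orbit x", OF mem_orbit_self])

lemma orbit_rep: "orbit (rep x) = orbit x"
  by (rule orbit_eq[OF rep_mem_orbit])

lemma rep_eq: "orbit x = orbit y \<Longrightarrow> rep x = rep y"
  by (simp only: rep_def)

lemma rep_rep: "rep (rep x) = rep x"
  by (rule rep_eq[OF orbit_rep])

lemma rep_mem: "x \<in> X \<Longrightarrow> rep x \<in> X"
  using orbit_subset rep_mem_orbit by (rule subsetD)

lemma rep_act: "a \<in> S \<Longrightarrow> rep (a x) = rep x"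
  by (rule rep_eq[OF orbit_eq[OF act_mem_orbit]])

definition transporter :: "nat \<Rightarrow> nat \<Rightarrow> nat" where
  "transporter y = (THE s. s \<in> S \<and> s (rep y) = y)"

lemma transporter_eqI:
  assumes "s \<in> S" "y \<in> X" "s (rep y) = y"
  shows "transporter y = s"
  unfolding transporter_def
proof (rule the_equality)
  show "s \<in> S \<and> s (rep y) = y"
    using assms by blast
  fix s' assume "s' \<in> S \<and> s' (rep y) = y"
  then show "s' = s"
    using eq_if_eq_at[of s' s "rep y"] assms rep_mem by auto
qed

lemma transporter:
  assumes "y \<in> X"
  shows "transporter y \<in> S" "transporter y (rep y) = y"
proof -
  have "y \<in> orbit (rep y)"
    using mem_orbit_self orbit_rep by blast
  then obtain s where "s \<in> S" "s (rep y) = y"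
    unfolding mem_orbit_iff by auto
  with transporter_eqI[OF _ assms] show "transporter y \<in> S" "transporter y (rep y) = y"
    by auto
qed

lemma transporter_act:
  assumes "a \<in> S" "y \<in> X"
  shows "transporter (a y) = a \<circ> transporter y"
proof (rule transporter_eqI)
  show "a \<circ> transporter y \<in> S"
    using assms comp_mem transporter(1) by blast
  show "a y \<in> X"
    using assms invariant by blast
  show "(a \<circ> transporter y) (rep (a y)) = a y"
    using rep_act[OF assms(1)] transporter(2)[OF assms(2)] by simp
qed

definition extend :: "(nat \<Rightarrow> nat) \<Rightarrow> nat \<Rightarrow> nat" where
  "extend g y = (if y \<in> X then transporter y (g (rep y)) else y)"

lemma extend_act:
  assumes "a \<in> S" "y \<in> X"
  shows "extend g (a y) = a (extend g y)"
  using assms invariant transporter_act[OF assms] rep_act[OF assms(1)] by (simp add: extend_def)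

lemma extend_rep:
  assumes "y \<in> X"
  shows "extend g (rep y) = g (rep y)"
  using assms rep_mem rep_rep transporter_eqI[OF id_mem] by (simp add: extend_def)

lemma extend_involutive:
  assumes "\<And>r. r \<in> rep ` X \<Longrightarrow> g r \<in> X \<and> extend g (g r) = r"
  shows "extend g (extend g y) = y"
proof (cases "y \<in> X")
  case True
  have "extend g (extend g y) = extend g (transporter y (g (rep y)))"
    using True by (simp add: extend_def)
  also have "\<dots> = transporter y (extend g (g (rep y)))"
    using True assms transporter(1) extend_act by blast
  also have "\<dots> = y"
    using True assms transporter(2) by simp
  finally show ?thesis .
qed (simp add: extend_def)

lemma extend_swaps:
  assumes sides: "preserves_or_swaps S X A"
    and "y \<in> X" "g (rep y) \<in> X" "g (rep y) \<in> A \<longleftrightarrow> rep y \<notin> A"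
  shows "extend g y \<in> A \<longleftrightarrow> y \<notin> A"
proof -
  have "(\<forall>x\<in>X. transporter y x \<in> A \<longleftrightarrow> x \<in> A) \<or> (\<forall>x\<in>X. transporter y x \<in> A \<longleftrightarrow> x \<notin> A)"
    using sides transporter(1)[OF assms(2)] unfolding preserves_or_swaps_def by blast
  then show ?thesis
    using assms(2-4) transporter(2)[OF assms(2)] rep_mem[OF assms(2)]
    by (simp add: extend_def) metis
qed

lemma swapping_involution_extend:
  assumes sides: "preserves_or_swaps S X A"
    and g: "\<And>r. r \<in> rep ` X \<Longrightarrow> g r \<in> X \<and> extend g (g r) = r \<and> (g r \<in> A \<longleftrightarrow> r \<notin> A)"
  shows "swapping_involution S X A (extend g)"
  unfolding swapping_involution_def
proof (intro conjI allI ballI impI)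
  show "extend g x = x" if "x \<notin> X" for x
    using that by (simp add: extend_def)
  show "extend g (extend g x) = x" for x
    using g by (intro extend_involutive) blast
  show "extend g x \<in> A \<longleftrightarrow> x \<notin> A" if "x \<in> X" for x
    using that g[of "rep x"] by (intro extend_swaps[OF sides]) auto
  show "extend g (s x) = s (extend g x)" if "s \<in> S" "x \<in> X" for s x
    using that by (rule extend_act)
qed

lemma swapping_involution_extend_element:
  assumes sides: "preserves_or_swaps S X A"
    and t: "t \<in> S" "t \<circ> t = id" "\<And>x. x \<in> X \<Longrightarrow> t x \<in> A \<longleftrightarrow> x \<notin> A"
  shows "swapping_involution S X A (extend t)"
proof (rule swapping_involution_extend[OF sides])
  fix r assume "r \<in> rep ` X"
  then obtain y where y: "y \<in> X" "r = rep y" by blast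
  then have "extend t (t r) = t (t r)"
    using extend_act[OF t(1)] extend_rep rep_mem by simp
  then show "t r \<in> X \<and> extend t (t r) = r \<and> (t r \<in> A \<longleftrightarrow> r \<notin> A)"
    using y t invariant rep_mem by (simp add: fun_eq_iff)
qed

lemma card_rep_image:
  assumes "B \<subseteq> X"
  shows "card (rep ` B) = card (orbit ` B)"
proof -
  have "inj_on orbit (rep ` B)"
    using rep_eq rep_rep by (intro inj_onI) (metis imageE)
  moreover have "orbit ` rep ` B = orbit ` B"
    using orbit_rep by (simp add: image_image)
  ultimately show ?thesis
    using card_image by fastforce
qed

lemma swapping_involution_if_balanced:
  assumes "A \<subseteq> X"
    and preserves: "\<And>s x. s \<in> S \<Longrightarrow> x \<in> X \<Longrightarrow> s x \<in> A \<longleftrightarrow> x \<in> A"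
    and balanced: "card (orbit ` A) = card (orbit ` (X - A))"
  shows "\<exists>\<phi>. swapping_involution S X A \<phi>"
proof -
  define RA where "RA = rep ` A"
  define RB where "RB = rep ` (X - A)"
  have rep_mem_iff: "rep x \<in> A \<longleftrightarrow> x \<in> A" if "x \<in> X" for x
    using that preserves rep_mem_orbit[of x] unfolding mem_orbit_iff by auto
  have RA: "RA \<subseteq> A" and RB: "RB \<subseteq> X - A" and reps: "rep ` X = RA \<union> RB"
    using assms(1) rep_mem rep_mem_iff unfolding RA_def RB_def by auto
  have "card RA = card RB"
    using balanced card_rep_image assms(1) unfolding RA_def RB_def by simp
  then obtain \<beta> where \<beta>: "bij_betw \<beta> RA RB"
    using finite_same_card_bij finite_X unfolding RA_def RB_def
    by (metis Diff_subset assms(1) finite_imageI finite_subset)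
  define g where "g r = (if r \<in> A then \<beta> r else inv_into RA \<beta> r)" for r
  have g: "g r \<in> rep ` X \<and> g (g r) = r \<and> (g r \<in> A \<longleftrightarrow> r \<notin> A)" if "r \<in> rep ` X" for r
    using that reps RA RB bij_betw_apply[OF \<beta>] bij_betw_apply[OF bij_betw_inv_into[OF \<beta>]]
      bij_betw_inv_into_left[OF \<beta>] bij_betw_inv_into_right[OF \<beta>]
    unfolding g_def by (auto split: if_splits)
  have "swapping_involution S X A (extend g)"
  proof (rule swapping_involution_extend)
    show "preserves_or_swaps S X A"
      unfolding preserves_or_swaps_def using preserves by blast
    fix r assume r: "r \<in> rep ` X"
    then obtain y where y: "y \<in> X" "g r = rep y"
      using g by blast
    then have "extend g (g r) = g (g r)"
      using extend_rep by simp
    then show "g r \<in> X \<and> extend g (g r) = r \<and> (g r \<in> A \<longleftrightarrow> r \<notin> A)"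
      using g[OF r] y rep_mem by auto
  qed
  then show ?thesis by blast
qed

end

lemma semiregular_perm_group_restrict:
  assumes "semiregular_perm_group m S X" "subgroup H (sym_group m)" "H \<subseteq> S" "Y \<subseteq> X"
    and "\<And>h y. h \<in> H \<Longrightarrow> y \<in> Y \<Longrightarrow> h y \<in> Y"
  shows "semiregular_perm_group m H Y"
proof -
  interpret semiregular_perm_group m S X by fact
  show ?thesis
  proof (rule semiregular_perm_group.intro)
    show "subgroup H (sym_group m)" by fact
    show "Y \<subseteq> {1..m}"
      using assms(4) X_subset by blast
    show "h y \<in> Y" if "h \<in> H" "y \<in> Y" for h y
      using that by (rule assms(5))
    show "h = id" if "h \<in> H" "y \<in> Y" "h y = y" for h y
      using that assms(3,4) fixpoint_free by blast
  qed
qed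

section \<open>The partition of I into W and M\<close>

lemma Wset_Un_Mset: "Wset n \<union> Mset n = Iset n"
  unfolding Wset_def Mset_def Iset_def by auto

lemma Wset_Int_Mset: "Wset n \<inter> Mset n = {}"
  unfolding Wset_def Mset_def by auto

lemma Iset_Diff_Wset: "Iset n - Wset n = Mset n"
  using Wset_Un_Mset Wset_Int_Mset by blast

lemma card_Wset: "card (Wset n) = n"
  unfolding Wset_def by simp

lemma card_Mset: "card (Mset n) = n"
  unfolding Mset_def by simp

lemma Gfix_subset_Gstar: "Gfix n \<subseteq> Gstar n"
  unfolding Gfix_def Gstar_def by auto

lemma Gstar_cases:
  "\<phi> \<in> Gstar n \<Longrightarrow> \<phi> \<in> Gfix n \<or> \<phi> ` Wset n = Mset n \<and> \<phi> ` Mset n = Wset n"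
  unfolding Gstar_def Gfix_def by (auto simp: doubleton_eq_iff)

lemma Gstar_Diff_Gfix_swaps:
  assumes "\<phi> \<in> Gstar n - Gfix n"
  shows "\<phi> permutes Iset n \<and> \<phi> ` Wset n = Mset n \<and> \<phi> ` Mset n = Wset n"
  using assms Gstar_cases[of \<phi> n] unfolding Gstar_def by auto

lemma Gstar_mem_Wset_iff:
  assumes "\<phi> \<in> Gstar n" "x \<in> Iset n"
  shows "\<phi> x \<in> Wset n \<longleftrightarrow> (x \<in> Wset n \<longleftrightarrow> \<phi> \<in> Gfix n)"
proof -
  have x: "x \<in> Wset n \<or> x \<in> Mset n"
    using assms(2) Wset_Un_Mset by blast
  show ?thesis
  proof (cases "\<phi> \<in> Gfix n")
    case True
    then have "\<phi> ` Wset n = Wset n" "\<phi> ` Mset n = Mset n"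
      unfolding Gfix_def by auto
    then show ?thesis
      using x True Wset_Int_Mset by blast
  next
    case False
    then have "\<phi> ` Wset n = Mset n" "\<phi> ` Mset n = Wset n"
      using Gstar_Diff_Gfix_swaps[of \<phi> n] assms(1) by auto
    then show ?thesis
      using x False Wset_Int_Mset by blast
  qed
qed

lemma preserves_or_swaps_Gstar:
  assumes "S \<subseteq> Gstar n"
  shows "preserves_or_swaps S (Iset n) (Wset n)"
  unfolding preserves_or_swaps_def
proof
  fix s assume "s \<in> S"
  then have "s \<in> Gstar n"
    using assms by (rule subsetD[rotated])
  then show "(\<forall>x\<in>Iset n. s x \<in> Wset n \<longleftrightarrow> x \<in> Wset n) \<or> (\<forall>x\<in>Iset n. s x \<in> Wset n \<longleftrightarrow> x \<notin> Wset n)"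
    using Gstar_mem_Wset_iff by (cases "s \<in> Gfix n") simp_all
qed

lemma subgroup_Gfix: "subgroup (Gfix n) (sym_group (2*n))"
proof (rule group.subgroupI[OF sym_group_is_group])
  show carrier: "Gfix n \<subseteq> carrier (sym_group (2*n))"
    by (auto simp: Gfix_def Iset_def sym_group_carrier)
  have "id \<in> Gfix n"
    unfolding Gfix_def by simp
  then show "Gfix n \<noteq> {}" by blast
  show "\<phi> \<otimes>\<^bsub>sym_group (2*n)\<^esub> \<psi> \<in> Gfix n" if "\<phi> \<in> Gfix n" "\<psi> \<in> Gfix n" for \<phi> \<psi>
  proof -
    have "(\<phi> \<circ> \<psi>) ` Wset n = Wset n" "(\<phi> \<circ> \<psi>) ` Mset n = Mset n"
      using that unfolding Gfix_def image_comp[symmetric] by simp_all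
    moreover have "\<phi> \<circ> \<psi> permutes Iset n"
      using that unfolding Gfix_def by (simp add: permutes_compose)
    ultimately show ?thesis
      unfolding Gfix_def sym_group_mult by blast
  qed
  show "inv\<^bsub>sym_group (2*n)\<^esub> \<phi> \<in> Gfix n" if \<phi>: "\<phi> \<in> Gfix n" for \<phi>
  proof -
    have perm: "\<phi> permutes Iset n" "\<phi> ` Wset n = Wset n" "\<phi> ` Mset n = Mset n"
      using \<phi> unfolding Gfix_def by auto
    then have "inv' \<phi> ` Wset n = Wset n" "inv' \<phi> ` Mset n = Mset n"
      using image_inv_f_f[OF permutes_inj[OF perm(1)], of "Wset n"]
        image_inv_f_f[OF permutes_inj[OF perm(1)], of "Mset n"] by simp_all
    moreover have "inv\<^bsub>sym_group (2*n)\<^esub> \<phi> = inv' \<phi>"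
      using \<phi> carrier by (intro sym_group_inv_equality) blast
    ultimately show ?thesis
      using permutes_inv[OF perm(1)] unfolding Gfix_def by simp
  qed
qed

lemma inv_comp_mem_Gfix:
  assumes "\<phi> \<in> Gstar n - Gfix n" "\<psi> \<in> Gstar n - Gfix n"
  shows "inv' \<phi> \<circ> \<psi> \<in> Gfix n"
proof -
  have \<phi>: "\<phi> permutes Iset n" "\<phi> ` Wset n = Mset n" "\<phi> ` Mset n = Wset n"
    using Gstar_Diff_Gfix_swaps[OF assms(1)] by auto
  have \<psi>: "\<psi> ` Wset n = Mset n" "\<psi> ` Mset n = Wset n" "\<psi> permutes Iset n"
    using Gstar_Diff_Gfix_swaps[OF assms(2)] by auto
  have inv_\<phi>: "inv' \<phi> ` Mset n = Wset n" "inv' \<phi> ` Wset n = Mset n"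
    using image_inv_f_f[OF permutes_inj[OF \<phi>(1)], of "Wset n"]
      image_inv_f_f[OF permutes_inj[OF \<phi>(1)], of "Mset n"] \<phi>(2,3) by simp_all
  have "(inv' \<phi> \<circ> \<psi>) ` Wset n = Wset n" "(inv' \<phi> \<circ> \<psi>) ` Mset n = Mset n"
    using inv_\<phi> \<psi>(1,2) unfolding image_comp[symmetric] by simp_all
  moreover have "inv' \<phi> \<circ> \<psi> permutes Iset n"
    using \<phi>(1) \<psi>(3) by (intro permutes_compose permutes_inv)
  ultimately show ?thesis
    unfolding Gfix_def by blast
qed

lemma semiregular_perm_group_Iset:
  assumes "subgroup S (sym_group (2*n))" "semiregular n S"
  shows "semiregular_perm_group (2*n) S (Iset n)"
proof (rule semiregular_perm_group.intro)
  show "subgroup S (sym_group (2*n))" by fact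
  show "Iset n \<subseteq> {1..2*n}"
    by (simp add: Iset_def)
  show "s x \<in> Iset n" if "s \<in> S" "x \<in> Iset n" for s x
  proof -
    have "s permutes Iset n"
      using subgroup.mem_carrier[OF assms(1) that(1)] by (simp add: sym_group_carrier Iset_def)
    with that(2) show ?thesis
      by (simp add: permutes_in_image)
  qed
  show "s = id" if "s \<in> S" "x \<in> Iset n" "s x = x" for s x
    using that assms(2) unfolding semiregular_def by blast
qed

lemma swapping_involution_if_Gfix:
  assumes "semiregular_perm_group (2*n) S (Iset n)" "S \<subseteq> Gfix n"
  shows "\<exists>\<phi>. swapping_involution S (Iset n) (Wset n) \<phi>"
proof -
  interpret semiregular_perm_group "2*n" S "Iset n" by fact
  have images: "s ` Wset n = Wset n" "s ` Mset n = Mset n" if "s \<in> S" for s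
  proof -
    have "s \<in> Gfix n"
      using assms(2) that by (rule subsetD)
    then show "s ` Wset n = Wset n" "s ` Mset n = Mset n"
      unfolding Gfix_def by simp_all
  qed
  have orbits: "card S * card (orbit ` A) = n" if "A \<in> {Wset n, Mset n}" for A
  proof -
    have "A \<subseteq> Iset n"
      using that by (auto simp flip: Wset_Un_Mset)
    moreover have "s ` A = A" if "s \<in> S" for s
      using \<open>A \<in> {Wset n, Mset n}\<close> images[OF that] by auto
    ultimately have "semiregular_perm_group (2*n) S A"
      by (intro semiregular_perm_group_restrict[OF assms(1) subgroup]) auto
    then show ?thesis
      using that semiregular_perm_group.card_mult_card_orbits card_Wset card_Mset by fastforce
  qed
  have "card S * card (orbit ` Wset n) = card S * card (orbit ` Mset n)"
    using orbits[of "Wset n"] orbits[of "Mset n"] by simp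
  moreover have "card S \<noteq> 0"
    using finite_S id_mem by auto
  ultimately have "card (orbit ` Wset n) = card (orbit ` (Iset n - Wset n))"
    by (simp add: Iset_Diff_Wset)
  moreover have "s x \<in> Wset n \<longleftrightarrow> x \<in> Wset n" if "s \<in> S" "x \<in> Iset n" for s x
    using that assms(2) Gfix_subset_Gstar Gstar_mem_Wset_iff by blast
  ultimately show ?thesis
    using Wset_Un_Mset by (intro swapping_involution_if_balanced) auto
qed

lemma swapping_involution_if_odd:
  assumes "semiregular_perm_group (2*n) S (Iset n)" "S \<subseteq> Gstar n" "\<not> S \<subseteq> Gfix n" "odd n"
  shows "\<exists>\<phi>. swapping_involution S (Iset n) (Wset n) \<phi>"
proof -
  interpret semiregular_perm_group "2*n" S "Iset n" by fact
  interpret Sym: group "sym_group (2*n)" by (rule sym_group_is_group)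
  define H where "H = S \<inter> Gfix n"
  have H: "subgroup H (sym_group (2*n))"
    unfolding H_def using subgroup subgroup_Gfix by (rule Sym.subgroups_Inter_pair)
  have "semiregular_perm_group (2*n) H (Wset n)"
    using Wset_Un_Mset unfolding H_def Gfix_def
    by (intro semiregular_perm_group_restrict[OF assms(1) H[unfolded H_def Gfix_def]]) auto
  then have "card H dvd n"
    using semiregular_perm_group.card_dvd_card card_Wset by metis
  then have odd_H: "odd (card H)"
    using assms(4) dvd_trans by blast
  obtain a where a: "a \<in> S - H"
    using assms(3) unfolding H_def by blast
  have swapping: "x \<in> Gstar n - Gfix n" if "x \<in> S - H" for x
    using that assms(2) unfolding H_def by blast
  have "card (S - H) = card H"
  proof (rule Sym.card_complement_eq_card_subgroup[OF H subgroup _ a])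
    show "H \<subseteq> S" unfolding H_def by blast
    fix x y assume "x \<in> S - H" "y \<in> S - H"
    then have "inv' x \<circ> y \<in> H"
      using inv_comp_mem_Gfix swapping comp_mem inv_mem unfolding H_def by blast
    moreover have "x \<in> carrier (sym_group (2*n))"
      using \<open>x \<in> S - H\<close> subgroup.mem_carrier[OF subgroup] by blast
    ultimately show "inv\<^bsub>sym_group (2*n)\<^esub> x \<otimes>\<^bsub>sym_group (2*n)\<^esub> y \<in> H"
      by (simp add: sym_group_mult)
  qed
  then obtain t where t: "t \<in> S - H" "t \<otimes>\<^bsub>sym_group (2*n)\<^esub> t = \<one>\<^bsub>sym_group (2*n)\<^esub>"
    using Sym.involution_in_complement_if_odd_card[OF H subgroup finite_S] odd_H by auto
  have "swapping_involution S (Iset n) (Wset n) (extend t)"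
  proof (rule swapping_involution_extend_element[OF preserves_or_swaps_Gstar[OF assms(2)]])
    show "t \<in> S" "t \<circ> t = id"
      using t by (simp_all add: sym_group_mult sym_group_one)
    show "t x \<in> Wset n \<longleftrightarrow> x \<notin> Wset n" if "x \<in> Iset n" for x
      using that swapping[OF t(1)] Gstar_mem_Wset_iff by blast
  qed
  then show ?thesis by blast
qed

lemma swapping_involution_in_Gstar_Diff_Gfix:
  assumes "n \<ge> 1" "S \<subseteq> carrier (sym_group (2*n))"
    and \<phi>: "swapping_involution S (Iset n) (Wset n) \<phi>"
  shows "\<phi> \<in> Gstar n - Gfix n \<and> group.ord (sym_group (2*n)) \<phi> = 2 \<and> (\<forall>s\<in>S. \<phi> \<circ> s = s \<circ> \<phi>)"
proof (intro conjI ballI)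
  have perm: "\<phi> permutes Iset n"
    using \<phi> by (rule swapping_involution_permutes)
  have W: "\<phi> ` Wset n = Mset n" and M: "\<phi> ` Mset n = Wset n"
    using swapping_involution_image[OF \<phi>] Wset_Un_Mset Iset_Diff_Wset by auto
  have "1 \<in> Wset n" "1 \<notin> Mset n"
    using assms(1) by (auto simp: Wset_def Mset_def)
  then have "Wset n \<noteq> Mset n" by blast
  then show "\<phi> \<in> Gstar n - Gfix n"
    using perm W M unfolding Gstar_def Gfix_def by (auto simp: insert_commute)
  have "\<phi> \<noteq> id"
    using W \<open>Wset n \<noteq> Mset n\<close> by auto
  moreover have "\<phi> \<circ> \<phi> = id"
    using \<phi> unfolding swapping_involution_def by auto
  moreover have "\<phi> \<in> carrier (sym_group (2*n))"
    using perm by (simp add: sym_group_carrier Iset_def)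
  ultimately show "group.ord (sym_group (2*n)) \<phi> = 2"
    by (simp add: group.ord_eq_2_iff[OF sym_group_is_group] sym_group_mult sym_group_one)
  fix s assume "s \<in> S"
  moreover have "s permutes Iset n"
    using \<open>s \<in> S\<close> assms(2) by (auto simp: sym_group_carrier Iset_def)
  ultimately show "\<phi> \<circ> s = s \<circ> \<phi>"
    using \<phi> by (intro swapping_involution_commute)
qed

theorem theorem11:
  fixes n :: nat and S :: "(nat \<Rightarrow> nat) set"
  assumes "n \<ge> 2" and "odd n"
    and "subgroup S (sym_group (2*n))"
    and "S \<subseteq> Gstar n"
    and "semiregular n S"
  shows "\<exists>\<phi> \<in> Gstar n - Gfix n. group.ord (sym_group (2*n)) \<phi> = 2 \<and>
           (\<forall>s \<in> S. \<phi> \<circ> s = s \<circ> \<phi>)"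
proof -
  have S: "semiregular_perm_group (2*n) S (Iset n)"
    using assms(3,5) by (rule semiregular_perm_group_Iset)
  obtain \<phi> where \<phi>: "swapping_involution S (Iset n) (Wset n) \<phi>"
    using swapping_involution_if_Gfix[OF S] swapping_involution_if_odd[OF S assms(4) _ assms(2)]
    by blast
  have "n \<ge> 1"
    using assms(1) by simp
  with \<phi> show ?thesis
    using swapping_involution_in_Gstar_Diff_Gfix subgroup.subset[OF assms(3)] by blast
qed

end
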